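(* Let $f = c_1 \wedge c_2 \wedge \cdots \wedge c_m$ ($m \ge 1$) be a Boolean formula in conjunctive normal form, where each clause is $c_i = L_{i1} \vee L_{i2} \vee \cdots \vee L_{i n_i}$ with $n_i \ge 1$ and each $L_{i\mu}$ a literal (a propositional variable or its negation). Introduce one new Boolean variable (an "indicator") $\xi_{i\mu}$ for each position $(i,\mu)$, $1 \le i \le m$, $1 \le \mu \le n_i$. Define $$g = \bigwedge_{i=1}^{m} \left(\xi_{i1} \oplus \xi_{i2} \oplus \cdots \oplus \xi_{i n_i}\right),$$ where $\oplus$ denotes exclusive or. For $1 \le i < j \le m$ let $$B_{ij} = \{ (\xi_{i\mu}, \xi_{j\nu}) : 1 \le \mu \le n_i,\ 1 \le \nu \le n_j,\ L_{i\mu} = \overline{L_{j\nu}} \},$$ i.e. the pairs of indicators of positions in two distinct clauses carrying complementary literals, and define $$h = \bigwedge_{1 \le i < j \le m} \ \bigwedge_{(\xi,\zeta) \in B_{ij}} (\bar{\xi} \vee \bar{\zeta})$$ (an empty conjunction being $\mathit{true}$). Then $f$ is satisfiable (by some assignment of its original variables) if and only if $g \wedge h$ is satisfiable (by some assignment of the indicator variables $\xi_{i\mu}$).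
   Context: Literals $L$ and $\overline{L}$ denote a variable and its negation (in either order). The formula $g \wedge h$ is a formula solely in the indicator variables $\xi_{i\mu}$; the original variables of $f$ do not occur in it. A multi-argument exclusive or $\xi_{i1} \oplus \cdots \oplus \xi_{in_i}$ is true exactly when an odd number of its arguments are true. *)

theory Defs
  imports Main
begin

text \<open>A literal is a pair (variable, polarity): (x, True) is x, (x, False) is its negation.
Positions are 0-indexed.\<close>

type_synonym 'v literal = "'v \<times> bool"
type_synonym 'v clause = "'v literal list"
type_synonym 'v cnf = "'v clause list"

definition complement :: "'v literal \<Rightarrow> 'v literal" where
  "complement L = (fst L, \<not> snd L)"

definition lit_val :: "('v \<Rightarrow> bool) \<Rightarrow> 'v literal \<Rightarrow> bool" where
  "lit_val a L = (a (fst L) = snd L)"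

definition cnf_val :: "('v \<Rightarrow> bool) \<Rightarrow> 'v cnf \<Rightarrow> bool" where
  "cnf_val a F = (\<forall>c \<in> set F. \<exists>L \<in> set c. lit_val a L)"

definition cnf_satisfiable :: "'v cnf \<Rightarrow> bool" where
  "cnf_satisfiable F = (\<exists>a. cnf_val a F)"

definition xor_list :: "bool list \<Rightarrow> bool" where
  "xor_list bs = odd (length (filter id bs))"

text \<open>Indicator assignments: \<xi> i \<mu> is the value of the indicator of position (i, \<mu>).\<close>

definition g_val :: "'v cnf \<Rightarrow> (nat \<Rightarrow> nat \<Rightarrow> bool) \<Rightarrow> bool" where
  "g_val F \<xi> = (\<forall>i < length F. xor_list (map (\<xi> i) [0..<length (F ! i)]))"

definition B :: "'v cnf \<Rightarrow> nat \<Rightarrow> nat \<Rightarrow> ((nat \<times> nat) \<times> (nat \<times> nat)) set" where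
  "B F i j = {((i, \<mu>), (j, \<nu>)) | \<mu> \<nu>. \<mu> < length (F ! i) \<and> \<nu> < length (F ! j) \<and>
                 F ! i ! \<mu> = complement (F ! j ! \<nu>)}"

definition h_val :: "'v cnf \<Rightarrow> (nat \<Rightarrow> nat \<Rightarrow> bool) \<Rightarrow> bool" where
  "h_val F \<xi> = (\<forall>i j. i < j \<and> j < length F \<longrightarrow>
      (\<forall>((i', \<mu>), (j', \<nu>)) \<in> B F i j. \<not> \<xi> i' \<mu> \<or> \<not> \<xi> j' \<nu>))"

definition gh_satisfiable :: "'v cnf \<Rightarrow> bool" where
  "gh_satisfiable F = (\<exists>\<xi>. g_val F \<xi> \<and> h_val F \<xi>)"

end

theory Submission
  imports Defs
begin

text \<open>
  An indicator assignment \<xi> satisfying g selects at least one position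
  in every clause (an odd count is nonzero), and h says exactly that positions selected
  in two distinct clauses never carry complementary literals.

  (\<Longrightarrow>) From a satisfying assignment choose one true literal per clause and select
  exactly that position: each XOR has a single true argument, and two true literals
  are never complementary.

  (\<Longleftarrow>) Given \<xi>, set a variable true iff some selected position carries it positively.
  A selected positive literal is then true.  A selected negative literal (v, False) is
  true unless v is selected positively somewhere; by h that can only happen in the same
  clause, and then that positive occurrence is a true literal of the clause.
\<close>

lemma xor_list_imp_ex: "xor_list bs \<Longrightarrow> \<exists>b \<in> set bs. b"
proof (rule ccontr)
  assume "xor_list bs" and "\<not> (\<exists>b \<in> set bs. b)"
  then have "filter id bs = []" by (simp add: filter_empty_conv)
  with \<open>xor_list bs\<close> show False by (simp add: xor_list_def)
qed

lemma xor_list_singleton_indicator: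
  assumes "\<mu> < n"
  shows "xor_list (map (\<lambda>k. k = \<mu>) [0..<n])"
proof -
  have "filter (\<lambda>k. k = \<mu>) [0..<n] = [\<mu>]"
    using assms by (induction n) auto
  then have "filter id (map (\<lambda>k. k = \<mu>) [0..<n]) = [True]"
    by (simp add: filter_map comp_def)
  then show ?thesis by (simp add: xor_list_def)
qed

lemma g_val_selects:
  assumes "g_val F \<xi>" and "i < length F"
  obtains \<mu> where "\<mu> < length (F ! i)" and "\<xi> i \<mu>"
  using xor_list_imp_ex[of "map (\<xi> i) [0..<length (F ! i)]"] assms
  by (auto simp: g_val_def)

lemma complement_sym: "L = complement L' \<longleftrightarrow> L' = complement L"
  by (cases L; cases L') (auto simp: complement_def)

definition conflict_free :: "'v cnf \<Rightarrow> (nat \<Rightarrow> nat \<Rightarrow> bool) \<Rightarrow> bool" where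
  "conflict_free F \<xi> =
     (\<forall>i j \<mu> \<nu>. i < length F \<and> j < length F \<and> i \<noteq> j \<and>
        \<mu> < length (F ! i) \<and> \<nu> < length (F ! j) \<and> \<xi> i \<mu> \<and> \<xi> j \<nu> \<longrightarrow>
        F ! i ! \<mu> \<noteq> complement (F ! j ! \<nu>))"

text \<open>h, which only mentions ordered pairs of clauses i < j, is conflict-freeness;
  the symmetry of complementation handles the pairs with i > j.\<close>
lemma h_val_iff_conflict_free: "h_val F \<xi> \<longleftrightarrow> conflict_free F \<xi>"
proof
  assume h: "h_val F \<xi>"
  have ordered: "F ! i ! \<mu> \<noteq> complement (F ! j ! \<nu>)"
    if "i < j" "j < length F" "\<mu> < length (F ! i)" "\<nu> < length (F ! j)" "\<xi> i \<mu>" "\<xi> j \<nu>"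
    for i j \<mu> \<nu>
  proof
    assume "F ! i ! \<mu> = complement (F ! j ! \<nu>)"
    with that have "((i, \<mu>), (j, \<nu>)) \<in> B F i j" by (auto simp: B_def)
    with h that show False by (fastforce simp: h_val_def)
  qed
  show "conflict_free F \<xi>"
    unfolding conflict_free_def
  proof (intro allI impI)
    fix i j \<mu> \<nu>
    assume sel: "i < length F \<and> j < length F \<and> i \<noteq> j \<and> \<mu> < length (F ! i) \<and>
      \<nu> < length (F ! j) \<and> \<xi> i \<mu> \<and> \<xi> j \<nu>"
    show "F ! i ! \<mu> \<noteq> complement (F ! j ! \<nu>)"
    proof (cases "i < j")
      case True
      with sel show ?thesis by (intro ordered) auto
    next
      case False
      with sel have "F ! j ! \<nu> \<noteq> complement (F ! i ! \<mu>)" by (intro ordered) auto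
      then show ?thesis by (simp add: complement_sym)
    qed
  qed
next
  assume "conflict_free F \<xi>"
  then show "h_val F \<xi>"
    by (fastforce simp: h_val_def B_def conflict_free_def)
qed

lemma complement_not_both_true:
  "lit_val a L \<Longrightarrow> lit_val a L' \<Longrightarrow> L \<noteq> complement L'"
  by (auto simp: lit_val_def complement_def)

text \<open>Selecting one true literal per clause satisfies g and h.\<close>
lemma cnf_satisfiable_imp_gh: "cnf_satisfiable F \<Longrightarrow> gh_satisfiable F"
proof -
  assume "cnf_satisfiable F"
  then obtain a where a: "cnf_val a F" by (auto simp: cnf_satisfiable_def)
  have "\<exists>\<mu> < length (F ! i). lit_val a (F ! i ! \<mu>)" if "i < length F" for i
  proof -
    from a that obtain L where "L \<in> set (F ! i)" "lit_val a L"
      unfolding cnf_val_def by (meson nth_mem)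
    then show ?thesis by (metis in_set_conv_nth)
  qed
  then obtain c where c: "\<And>i. i < length F \<Longrightarrow> c i < length (F ! i) \<and> lit_val a (F ! i ! c i)"
    by metis
  define \<xi> where "\<xi> = (\<lambda>i \<mu>. \<mu> = c i)"
  have "g_val F \<xi>"
    unfolding g_val_def \<xi>_def using c xor_list_singleton_indicator by blast
  moreover have "conflict_free F \<xi>"
    unfolding conflict_free_def \<xi>_def using c complement_not_both_true by blast
  ultimately show "gh_satisfiable F"
    by (auto simp: gh_satisfiable_def h_val_iff_conflict_free)
qed

definition indicated_assignment :: "'v cnf \<Rightarrow> (nat \<Rightarrow> nat \<Rightarrow> bool) \<Rightarrow> 'v \<Rightarrow> bool" where
  "indicated_assignment F \<xi> v =
     (\<exists>j < length F. \<exists>\<nu> < length (F ! j). \<xi> j \<nu> \<and> F ! j ! \<nu> = (v, True))"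

lemma selected_clause_satisfied:
  assumes cf: "conflict_free F \<xi>"
    and i: "i < length F" and \<mu>: "\<mu> < length (F ! i)" "\<xi> i \<mu>"
  shows "\<exists>L \<in> set (F ! i). lit_val (indicated_assignment F \<xi>) L"
proof -
  let ?a = "indicated_assignment F \<xi>"
  obtain v p where vp: "F ! i ! \<mu> = (v, p)" by fastforce
  have selected_mem: "F ! i ! \<mu> \<in> set (F ! i)" using \<mu> by simp
  show ?thesis
  proof (cases "lit_val ?a (F ! i ! \<mu>)")
    case True
    with selected_mem show ?thesis by blast
  next
    case False
    then have "\<not> p" and "?a v"
      using i \<mu> vp by (auto simp: lit_val_def indicated_assignment_def)
    then obtain j \<nu> where j: "j < length F" "\<nu> < length (F ! j)" "\<xi> j \<nu>"
      and pos: "F ! j ! \<nu> = (v, True)"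
      by (auto simp: indicated_assignment_def)
    have "F ! i ! \<mu> = complement (F ! j ! \<nu>)"
      using vp pos \<open>\<not> p\<close> by (simp add: complement_def)
    with cf i \<mu> j have "j = i" by (auto simp: conflict_free_def)
    moreover have "lit_val ?a (F ! j ! \<nu>)"
      using pos \<open>?a v\<close> by (simp add: lit_val_def)
    ultimately show ?thesis using j by (metis nth_mem)
  qed
qed

lemma gh_satisfiable_imp_cnf: "gh_satisfiable F \<Longrightarrow> cnf_satisfiable F"
proof -
  assume "gh_satisfiable F"
  then obtain \<xi> where g: "g_val F \<xi>" and cf: "conflict_free F \<xi>"
    by (auto simp: gh_satisfiable_def h_val_iff_conflict_free)
  have "cnf_val (indicated_assignment F \<xi>) F"
    unfolding cnf_val_def
  proof
    fix c assume "c \<in> set F"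
    then obtain i where i: "i < length F" and c: "c = F ! i" by (metis in_set_conv_nth)
    obtain \<mu> where "\<mu> < length (F ! i)" "\<xi> i \<mu>" using g_val_selects[OF g i] .
    then show "\<exists>L \<in> set c. lit_val (indicated_assignment F \<xi>) L"
      using selected_clause_satisfied[OF cf i] c by blast
  qed
  then show "cnf_satisfiable F" by (auto simp: cnf_satisfiable_def)
qed

theorem mainTheorem1:
  fixes F :: "'v cnf"
  assumes "length F \<ge> 1"
    and "\<forall>c \<in> set F. length c \<ge> 1"
  shows "cnf_satisfiable F \<longleftrightarrow> gh_satisfiable F"
  using cnf_satisfiable_imp_gh gh_satisfiable_imp_cnf by blast

end
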